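(* For every $X\in B(\mathcal H)^d$ there exists a unitary $u\in B(\mathcal H)$ such that for every $k\ge0$, $$u\big(\mathrm{span}\{e_1,\dots,e_{k+1}\}\big)\subset V_k^X\quad\text{and}\quad u^*\big(V_k^X\big)\subset\mathrm{span}\{e_1,\dots,e_{\alpha(k,d)}\}.$$ That is, every $X\in B(\mathcal H)^d$ has a shift form.
   Context: $\mathcal H$ is an infinite-dimensional separable complex Hilbert space with a fixed orthonormal basis $e_1,e_2,\dots$, and $M\in B(\mathcal H)$ is the shift $Me_j=e_{j+1}$. For $X=(X^1,\dots,X^d)\in B(\mathcal H)^d$, $(X,M)$ denotes the $(d+1)$-tuple $(X^1,\dots,X^d,M)$. $\mathcal P(k,d)$ is the complex vector space of polynomials in $d+1$ noncommuting variables of degree at most $k$, and $\alpha(k,d)=\dim\mathcal P(k,d)$. For $k\ge0$, $V_k^X:=\{p(X,M)e_1: p\in\mathcal P(k,d)\}\subset\mathcal H$. A shift form of $X$ is a tuple $\widetilde X=u^*Xu=(u^*X^1u,\dots,u^*X^du)$ where $u$ is a unitary satisfying the two displayed inclusions for all $k\ge0$. *)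

theory Defs
  imports Complex_Main
begin

text \<open>Model: the separable infinite-dimensional Hilbert space H with fixed orthonormal
basis e_1, e_2, ... is realised as l^2(nat); the basis vector e_(j+1) is the
indicator of index j (0-based indexing).\<close>

type_synonym vec = "nat \<Rightarrow> complex"

definition l2 :: "vec set" where
  "l2 = {f. summable (\<lambda>n. (cmod (f n))\<^sup>2)}"

definition l2norm :: "vec \<Rightarrow> real" where
  "l2norm f = sqrt (\<Sum>n. (cmod (f n))\<^sup>2)"

definition l2inner :: "vec \<Rightarrow> vec \<Rightarrow> complex" where
  "l2inner f g = (\<Sum>n. f n * cnj (g n))"

definition ebasis :: "nat \<Rightarrow> vec" where
  "ebasis j = (\<lambda>n. if n = j then 1 else 0)"

definition bop :: "(vec \<Rightarrow> vec) \<Rightarrow> bool" where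
  "bop T \<longleftrightarrow> (\<forall>f\<in>l2. T f \<in> l2)
     \<and> (\<forall>f\<in>l2. \<forall>g\<in>l2. \<forall>a::complex. T (\<lambda>n. a * f n + g n) = (\<lambda>n. a * T f n + T g n))
     \<and> (\<exists>C. \<forall>f\<in>l2. l2norm (T f) \<le> C * l2norm f)"

definition is_adjoint :: "(vec \<Rightarrow> vec) \<Rightarrow> (vec \<Rightarrow> vec) \<Rightarrow> bool" where
  "is_adjoint T T' \<longleftrightarrow> bop T \<and> bop T' \<and>
     (\<forall>f\<in>l2. \<forall>g\<in>l2. l2inner (T f) g = l2inner f (T' g))"

definition unitary_with_adj :: "(vec \<Rightarrow> vec) \<Rightarrow> (vec \<Rightarrow> vec) \<Rightarrow> bool" where
  "unitary_with_adj u ustar \<longleftrightarrow> is_adjoint u ustar \<and>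
     (\<forall>f\<in>l2. ustar (u f) = f \<and> u (ustar f) = f)"

definition shiftM :: "vec \<Rightarrow> vec" where
  "shiftM f = (\<lambda>n. if n = 0 then 0 else f (n - 1))"

text \<open>The (d+1)-tuple (X,M): letter i < d is X^(i+1), letter d is M.\<close>
definition tupXM :: "nat \<Rightarrow> (nat \<Rightarrow> vec \<Rightarrow> vec) \<Rightarrow> nat \<Rightarrow> vec \<Rightarrow> vec" where
  "tupXM d X i = (if i < d then X i else shiftM)"

text \<open>Monomials (words) of degree at most k in the d+1 noncommuting variables.\<close>
definition words :: "nat \<Rightarrow> nat \<Rightarrow> nat list set" where
  "words k d = {w. length w \<le> k \<and> set w \<subseteq> {..d}}"

definition word_op :: "(nat \<Rightarrow> vec \<Rightarrow> vec) \<Rightarrow> nat list \<Rightarrow> vec \<Rightarrow> vec" where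
  "word_op A w = foldr (\<lambda>i g. A i \<circ> g) w id"

text \<open>A polynomial p in P(k,d) is given by its coefficients on the monomials in words k d;
  p(X,M) v is the corresponding linear combination of monomial evaluations.\<close>
definition poly_eval :: "nat \<Rightarrow> nat \<Rightarrow> (nat \<Rightarrow> vec \<Rightarrow> vec) \<Rightarrow> (nat list \<Rightarrow> complex) \<Rightarrow> vec \<Rightarrow> vec" where
  "poly_eval k d X p v = (\<lambda>n. \<Sum>w\<in>words k d. p w * word_op (tupXM d X) w v n)"

definition Vk :: "nat \<Rightarrow> nat \<Rightarrow> (nat \<Rightarrow> vec \<Rightarrow> vec) \<Rightarrow> vec set" where
  "Vk k d X = {poly_eval k d X p (ebasis 0) | p. True}"

text \<open>alpha(k,d) = dim P(k,d) = number of monomials of degree at most k.\<close>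
definition alpha :: "nat \<Rightarrow> nat \<Rightarrow> nat" where
  "alpha k d = card (words k d)"

text \<open>span{e_1,...,e_m} = vectors supported on the first m coordinates.\<close>
definition span_e :: "nat \<Rightarrow> vec set" where
  "span_e m = {f. \<forall>n\<ge>m. f n = 0}"

end

theory Submission
  imports Defs "HOL-Analysis.L2_Norm"
begin

text \<open>Gram-Schmidt is applied to the vectors w(X,M) e_1 of the monomials w, taken in order of
increasing degree. Of the resulting orthonormal sequence F_0, F_1, ..., at most alpha(k,d) members
span V_k; and F_0, ..., F_k already lie in V_k, because V_k contains the k+1 orthonormal vectors
e_(j+1) = M^j e_1 (j \<le> k), which cannot lie in the span of fewer than k+1 orthonormal vectors.
So every e_(n+1) is a combination of F_0, ..., F_(alpha(n,d)-1). An orthonormal sequence with this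
property is an orthonormal basis with triangular coordinates, and e_(j+1) \<mapsto> F_j extends to a
unitary u, which is the required shift form.\<close>

section \<open>Square-summable sequences\<close>

lemma mem_l2_iff: "f \<in> l2 \<longleftrightarrow> summable (\<lambda>n. (cmod (f n))\<^sup>2)"
  by (simp add: l2_def)

lemma cmod_add_sq_le: "(cmod (a + b))\<^sup>2 \<le> 2 * (cmod a)\<^sup>2 + 2 * (cmod b)\<^sup>2"
proof -
  have "(cmod (a + b))\<^sup>2 \<le> (cmod a + cmod b)\<^sup>2"
    by (simp add: power_mono norm_triangle_ineq)
  also have "\<dots> \<le> 2 * (cmod a)\<^sup>2 + 2 * (cmod b)\<^sup>2"
    using zero_le_power2[of "cmod a - cmod b"] by (simp add: power2_diff power2_sum)
  finally show ?thesis .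
qed

lemma l2_add: "f \<in> l2 \<Longrightarrow> g \<in> l2 \<Longrightarrow> (\<lambda>n. f n + g n) \<in> l2"
  unfolding mem_l2_iff
  by (rule summable_comparison_test'[where g="\<lambda>n. 2 * (cmod (f n))\<^sup>2 + 2 * (cmod (g n))\<^sup>2" and N=0])
     (auto intro: summable_add summable_mult simp: cmod_add_sq_le)

lemma l2_scale: "f \<in> l2 \<Longrightarrow> (\<lambda>n. c * f n) \<in> l2"
  unfolding mem_l2_iff by (simp add: norm_mult power_mult_distrib summable_mult)

lemma l2_diff: "f \<in> l2 \<Longrightarrow> g \<in> l2 \<Longrightarrow> (\<lambda>n. f n - g n) \<in> l2"
  using l2_add[OF _ l2_scale[of g "-1"], of f] by simp

lemma l2_finite_support: "(\<And>n. M \<le> n \<Longrightarrow> f n = 0) \<Longrightarrow> f \<in> l2"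
  unfolding mem_l2_iff by (rule summable_finite[of "{..<M}"]) auto

lemma l2_ebasis: "ebasis j \<in> l2"
  by (rule l2_finite_support[of "Suc j"]) (simp add: ebasis_def)

lemma suminf_cmod_sq_eq_l2norm_sq: "f \<in> l2 \<Longrightarrow> (\<Sum>n. (cmod (f n))\<^sup>2) = (l2norm f)\<^sup>2"
  unfolding l2norm_def mem_l2_iff by (simp add: suminf_nonneg)

lemma l2norm_nonneg: "f \<in> l2 \<Longrightarrow> 0 \<le> l2norm f"
  unfolding l2norm_def mem_l2_iff by (simp add: suminf_nonneg)

lemma l2norm_le_iff:
  "f \<in> l2 \<Longrightarrow> l2norm f \<le> r \<longleftrightarrow> (\<Sum>n. (cmod (f n))\<^sup>2) \<le> r\<^sup>2" if "0 \<le> r"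
  using that by (simp add: suminf_cmod_sq_eq_l2norm_sq power2_le_iff_abs_le l2norm_nonneg)

lemma l2norm_eq_0_imp_zero:
  assumes "f \<in> l2" "l2norm f = 0"
  shows "f = (\<lambda>n. 0)"
proof -
  have "(\<Sum>n. (cmod (f n))\<^sup>2) = 0"
    using suminf_cmod_sq_eq_l2norm_sq[OF assms(1)] assms(2) by simp
  then show ?thesis
    using suminf_eq_zero_iff[of "\<lambda>n. (cmod (f n))\<^sup>2"] assms(1) by (auto simp: mem_l2_iff)
qed

lemma l2_bounded_partial_sums:
  assumes "\<And>K. (\<Sum>n<K. (cmod (f n))\<^sup>2) \<le> r\<^sup>2" and "0 \<le> r"
  shows "f \<in> l2" and "l2norm f \<le> r"
proof -
  show f: "f \<in> l2"
    unfolding mem_l2_iff by (rule summableI_nonneg_bounded[OF _ assms(1)]) simp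
  have "(\<Sum>n. (cmod (f n))\<^sup>2) \<le> r\<^sup>2"
    by (rule suminf_le_const[OF _ assms(1)]) (use f in \<open>simp add: mem_l2_iff\<close>)
  then show "l2norm f \<le> r"
    using l2norm_le_iff[OF assms(2) f] by simp
qed

lemma l2inner_norm_summable:
  assumes "f \<in> l2" "g \<in> l2"
  shows "summable (\<lambda>n. cmod (f n * cnj (g n)))"
proof (rule summable_comparison_test'[where g="\<lambda>n. (cmod (f n))\<^sup>2 + (cmod (g n))\<^sup>2" and N=0])
  show "summable (\<lambda>n. (cmod (f n))\<^sup>2 + (cmod (g n))\<^sup>2)"
    using assms by (intro summable_add) (simp_all add: mem_l2_iff)
  fix n
  have "2 * (cmod (f n) * cmod (g n)) \<le> (cmod (f n))\<^sup>2 + (cmod (g n))\<^sup>2"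
    using zero_le_power2[of "cmod (f n) - cmod (g n)"] by (simp add: power2_diff)
  moreover have "0 \<le> cmod (f n) * cmod (g n)" by simp
  ultimately have "cmod (f n) * cmod (g n) \<le> (cmod (f n))\<^sup>2 + (cmod (g n))\<^sup>2" by linarith
  then show "norm (cmod (f n * cnj (g n))) \<le> (cmod (f n))\<^sup>2 + (cmod (g n))\<^sup>2"
    by (simp add: norm_mult)
qed

lemma l2inner_summable: "f \<in> l2 \<Longrightarrow> g \<in> l2 \<Longrightarrow> summable (\<lambda>n. f n * cnj (g n))"
  by (rule summable_norm_cancel[OF l2inner_norm_summable])

lemma l2inner_add_left:
  assumes "f \<in> l2" "g \<in> l2" "h \<in> l2"
  shows "l2inner (\<lambda>n. a * f n + g n) h = a * l2inner f h + l2inner g h"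
proof -
  have "l2inner (\<lambda>n. a * f n + g n) h = (\<Sum>n. a * (f n * cnj (h n)) + g n * cnj (h n))"
    unfolding l2inner_def by (simp add: algebra_simps)
  also have "\<dots> = (\<Sum>n. a * (f n * cnj (h n))) + (\<Sum>n. g n * cnj (h n))"
    by (intro suminf_add[symmetric] summable_mult l2inner_summable assms)
  finally show ?thesis
    unfolding l2inner_def by (simp add: suminf_mult l2inner_summable assms)
qed

lemma l2inner_scale_left: "f \<in> l2 \<Longrightarrow> h \<in> l2 \<Longrightarrow> l2inner (\<lambda>n. a * f n) h = a * l2inner f h"
  unfolding l2inner_def by (simp add: mult.assoc suminf_mult l2inner_summable)

lemma l2inner_diff_left:
  "f \<in> l2 \<Longrightarrow> g \<in> l2 \<Longrightarrow> h \<in> l2 \<Longrightarrow> l2inner (\<lambda>n. f n - g n) h = l2inner f h - l2inner g h"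
  using l2inner_add_left[of g f h "-1"] by simp

lemma l2inner_cnj_commute:
  assumes "f \<in> l2" "g \<in> l2"
  shows "l2inner g f = cnj (l2inner f g)"
proof -
  have "(\<lambda>n. cnj (f n * cnj (g n))) sums cnj (l2inner f g)"
    unfolding l2inner_def
    by (rule sums_cnj[THEN iffD2, OF summable_sums[OF l2inner_summable[OF assms]]])
  then show ?thesis
    unfolding l2inner_def by (simp add: sums_unique[symmetric] mult.commute)
qed

lemma l2inner_self: "f \<in> l2 \<Longrightarrow> l2inner f f = complex_of_real ((l2norm f)\<^sup>2)"
  unfolding l2inner_def
  by (simp add: complex_norm_square[symmetric] suminf_of_real mem_l2_iff
      suminf_cmod_sq_eq_l2norm_sq[symmetric])

lemma l2inner_ebasis_right: "l2inner f (ebasis j) = f j"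
proof -
  have "(\<lambda>n. f n * cnj (ebasis j n)) = (\<lambda>n. if n = j then f n else 0)"
    by (auto simp: ebasis_def)
  then show ?thesis
    unfolding l2inner_def using sums_unique[OF sums_single[of j f]] by simp
qed

lemma l2inner_ebasis_left: "l2inner (ebasis j) f = cnj (f j)"
proof -
  have "(\<lambda>n. ebasis j n * cnj (f n)) = (\<lambda>n. if n = j then cnj (f n) else 0)"
    by (auto simp: ebasis_def)
  then show ?thesis
    unfolding l2inner_def using sums_unique[OF sums_single[of j "\<lambda>n. cnj (f n)"]] by simp
qed

lemma l2inner_Cauchy_Schwarz:
  assumes f: "f \<in> l2" and g: "g \<in> l2"
  shows "cmod (l2inner f g) \<le> l2norm f * l2norm g"
proof -
  have "cmod (l2inner f g) \<le> (\<Sum>n. cmod (f n * cnj (g n)))"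
    unfolding l2inner_def by (rule summable_norm[OF l2inner_norm_summable[OF f g]])
  also have "\<dots> \<le> l2norm f * l2norm g"
  proof (rule suminf_le_const[OF l2inner_norm_summable[OF f g]])
    fix K
    have "(\<Sum>n<K. cmod (f n * cnj (g n))) = (\<Sum>n<K. \<bar>cmod (f n)\<bar> * \<bar>cmod (g n)\<bar>)"
      by (simp add: norm_mult)
    also have "\<dots> \<le> L2_set (\<lambda>n. cmod (f n)) {..<K} * L2_set (\<lambda>n. cmod (g n)) {..<K}"
      by (rule L2_set_mult_ineq)
    also have "\<dots> \<le> l2norm f * l2norm g"
      unfolding L2_set_def l2norm_def
      using f g by (intro mult_mono real_sqrt_le_mono sum_le_suminf)
        (auto simp: mem_l2_iff suminf_nonneg sum_nonneg)
    finally show "(\<Sum>n<K. cmod (f n * cnj (g n))) \<le> l2norm f * l2norm g" .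
  qed
  finally show ?thesis .
qed

lemma l2inner_tendsto:
  assumes "\<And>M. f' M \<in> l2" "f \<in> l2" "h \<in> l2"
    and "\<And>M. l2norm (\<lambda>n. f n - f' M n) \<le> b M" "b \<longlonglongrightarrow> 0"
  shows "(\<lambda>M. l2inner (f' M) h) \<longlonglongrightarrow> l2inner f h"
proof (rule LIM_zero_cancel, rule tendsto_0_le[where K=1])
  show "(\<lambda>M. b M * l2norm h) \<longlonglongrightarrow> 0"
    using tendsto_mult_left_zero[OF assms(5)] by simp
  have "cmod (l2inner (f' M) h - l2inner f h) \<le> b M * l2norm h" for M
  proof -
    have "cmod (l2inner (f' M) h - l2inner f h) \<le> l2norm (\<lambda>n. f n - f' M n) * l2norm h"
      using l2inner_Cauchy_Schwarz[OF l2_diff[OF assms(2,1)] assms(3)]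
        l2inner_diff_left[OF assms(2,1,3)] by (simp add: norm_minus_commute)
    also have "\<dots> \<le> b M * l2norm h"
      by (intro mult_right_mono assms(4) l2norm_nonneg assms(3))
    finally show ?thesis .
  qed
  then show "\<forall>\<^sub>F M in sequentially. norm (l2inner (f' M) h - l2inner f h) \<le> norm (b M * l2norm h) * 1"
    by (intro always_eventually allI) (metis abs_ge_self order_trans real_norm_def mult_1_right)
qed

definition truncate :: "nat \<Rightarrow> vec \<Rightarrow> vec" where
  "truncate M g = (\<lambda>n. if n < M then g n else 0)"

lemma l2_truncate: "truncate M g \<in> l2"
  by (rule l2_finite_support[of M]) (simp add: truncate_def)

lemma l2norm_truncate_tendsto:
  assumes g: "g \<in> l2"
  shows "(\<lambda>M. l2norm (\<lambda>n. g n - truncate M g n)) \<longlonglongrightarrow> 0"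
proof -
  let ?a = "\<lambda>n. (cmod (g n))\<^sup>2"
  have s: "summable ?a" using g by (simp add: mem_l2_iff)
  have "(\<lambda>n. (cmod (g n - truncate M g n))\<^sup>2) = (\<lambda>n. ?a n - (if n < M then ?a n else 0))" for M
    by (auto simp: truncate_def)
  moreover have "(\<Sum>n. if n < M then ?a n else 0) = (\<Sum>n<M. ?a n)" for M
    by (subst suminf_finite[of "{..<M}"]) auto
  ultimately have eq: "l2norm (\<lambda>n. g n - truncate M g n) = sqrt (suminf ?a - (\<Sum>n<M. ?a n))" for M
    unfolding l2norm_def
    using suminf_diff[OF s summable_finite[of "{..<M}" "\<lambda>n. if n < M then ?a n else 0"]] by simp
  have "(\<lambda>M. sqrt (suminf ?a - (\<Sum>n<M. ?a n))) \<longlonglongrightarrow> sqrt (suminf ?a - suminf ?a)"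
    by (intro tendsto_real_sqrt tendsto_diff tendsto_const summable_LIMSEQ s)
  then show ?thesis by (simp add: eq)
qed

section \<open>Finite linear combinations and orthonormal families\<close>

definition lin_closed :: "vec set \<Rightarrow> bool" where
  "lin_closed S \<longleftrightarrow>
     (\<lambda>n. 0) \<in> S \<and> (\<forall>a f g. f \<in> S \<longrightarrow> g \<in> S \<longrightarrow> (\<lambda>n. a * f n + g n) \<in> S)"

lemma lin_closed_sum:
  assumes "lin_closed S" "finite I" "\<And>i. i \<in> I \<Longrightarrow> G i \<in> S"
  shows "(\<lambda>n. \<Sum>i\<in>I. c i * G i n) \<in> S"
  using assms(2,3)
proof (induction I rule: finite_induct)
  case empty
  then show ?case using assms(1) by (simp add: lin_closed_def)
next
  case (insert x I)
  then show ?case using assms(1) unfolding lin_closed_def by simp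
qed

lemma lin_closed_l2: "lin_closed l2"
  unfolding lin_closed_def by (auto intro: l2_add l2_scale l2_finite_support)

definition lincomb :: "(nat \<Rightarrow> vec) \<Rightarrow> nat \<Rightarrow> (nat \<Rightarrow> complex) \<Rightarrow> vec" where
  "lincomb F M c = (\<lambda>n. \<Sum>j<M. c j * F j n)"

lemma lin_closed_lincomb: "lin_closed S \<Longrightarrow> (\<And>j. j < M \<Longrightarrow> F j \<in> S) \<Longrightarrow> lincomb F M c \<in> S"
  unfolding lincomb_def by (rule lin_closed_sum) auto

lemma l2_lincomb: "(\<And>j. j < M \<Longrightarrow> F j \<in> l2) \<Longrightarrow> lincomb F M c \<in> l2"
  by (rule lin_closed_lincomb[OF lin_closed_l2])

lemma lincomb_add: "lincomb F M (\<lambda>j. a * c j + c' j) = (\<lambda>n. a * lincomb F M c n + lincomb F M c' n)"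
  unfolding lincomb_def by (simp add: algebra_simps sum.distrib sum_distrib_left)

lemma lincomb_extend:
  "M \<le> M' \<Longrightarrow> lincomb F M c = lincomb F M' (\<lambda>j. if j < M then c j else 0)"
  unfolding lincomb_def by (rule ext, rule sum.mono_neutral_cong_left) auto

lemma lincomb_cong:
  "(\<And>j. j < M \<Longrightarrow> F j = G j) \<Longrightarrow> (\<And>j. j < M \<Longrightarrow> c j = c' j) \<Longrightarrow> lincomb F M c = lincomb G M c'"
  unfolding lincomb_def by (rule ext, rule sum.cong) auto

lemma lincomb_Suc: "lincomb F (Suc M) c n = lincomb F M c n + c M * F M n"
  by (simp add: lincomb_def)

lemma l2inner_lincomb_left:
  assumes "\<And>j. j < M \<Longrightarrow> F j \<in> l2" "h \<in> l2"
  shows "l2inner (lincomb F M c) h = (\<Sum>j<M. c j * l2inner (F j) h)"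
proof -
  have "l2inner (lincomb F M c) h = (\<Sum>n. \<Sum>j<M. c j * (F j n * cnj (h n)))"
    unfolding l2inner_def lincomb_def by (simp add: sum_distrib_right mult.assoc)
  also have "\<dots> = (\<Sum>j<M. \<Sum>n. c j * (F j n * cnj (h n)))"
    by (rule suminf_sum) (intro summable_mult l2inner_summable assms; simp)
  also have "\<dots> = (\<Sum>j<M. c j * l2inner (F j) h)"
    unfolding l2inner_def by (intro sum.cong refl suminf_mult l2inner_summable assms; simp)
  finally show ?thesis .
qed

definition orthonormal_on :: "nat set \<Rightarrow> (nat \<Rightarrow> vec) \<Rightarrow> bool" where
  "orthonormal_on I F \<longleftrightarrow> (\<forall>j\<in>I. F j \<in> l2) \<and>
     (\<forall>i\<in>I. \<forall>j\<in>I. l2inner (F i) (F j) = (if i = j then 1 else 0))"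

context
  fixes I :: "nat set" and F :: "nat \<Rightarrow> vec" and M :: nat
  assumes orth: "orthonormal_on I F" and initial: "{..<M} \<subseteq> I"
begin

private lemma l2_initial: "j < M \<Longrightarrow> F j \<in> l2"
  using orth initial by (auto simp: orthonormal_on_def)

lemma l2inner_lincomb_orthonormal:
  assumes i: "i \<in> I"
  shows "l2inner (lincomb F M c) (F i) = (if i < M then c i else 0)"
proof -
  have "l2inner (lincomb F M c) (F i) = (\<Sum>j<M. c j * l2inner (F j) (F i))"
    by (rule l2inner_lincomb_left[OF l2_initial]) (use orth i in \<open>auto simp: orthonormal_on_def\<close>)
  also have "\<dots> = (\<Sum>j<M. if j = i then c j else 0)"
    by (rule sum.cong) (use orth initial i in \<open>auto simp: orthonormal_on_def\<close>)
  finally show ?thesis by (simp add: sum.delta')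
qed

lemma l2norm_lincomb_orthonormal: "(l2norm (lincomb F M c))\<^sup>2 = (\<Sum>j<M. (cmod (c j))\<^sup>2)"
proof -
  have v: "lincomb F M c \<in> l2" by (rule l2_lincomb[OF l2_initial])
  have "complex_of_real ((l2norm (lincomb F M c))\<^sup>2) = l2inner (lincomb F M c) (lincomb F M c)"
    by (rule l2inner_self[OF v, symmetric])
  also have "\<dots> = (\<Sum>j<M. c j * l2inner (F j) (lincomb F M c))"
    by (rule l2inner_lincomb_left[OF l2_initial v])
  also have "\<dots> = (\<Sum>j<M. c j * cnj (c j))"
    using initial
    by (intro sum.cong refl) (auto simp: l2inner_cnj_commute[OF v l2_initial] l2inner_lincomb_orthonormal)
  also have "\<dots> = complex_of_real (\<Sum>j<M. (cmod (c j))\<^sup>2)"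
    by (simp add: complex_norm_square[symmetric])
  finally show ?thesis by (simp only: of_real_eq_iff)
qed

lemma lincomb_orthonormal_coeffs: "v = lincomb F M c \<Longrightarrow> v = lincomb F M (\<lambda>j. l2inner v (F j))"
  using initial unfolding lincomb_def
  by (auto intro!: ext sum.cong simp: l2inner_lincomb_orthonormal[unfolded lincomb_def])

lemma Bessel_inequality:
  assumes h: "h \<in> l2"
  shows "(\<Sum>j<M. (cmod (l2inner h (F j)))\<^sup>2) \<le> (l2norm h)\<^sup>2"
proof -
  define v where "v = lincomb F M (\<lambda>j. l2inner h (F j))"
  have v: "v \<in> l2" unfolding v_def by (rule l2_lincomb[OF l2_initial])
  have "l2inner v h = (\<Sum>j<M. l2inner h (F j) * cnj (l2inner h (F j)))"
    unfolding v_def by (simp add: l2inner_lincomb_left[OF l2_initial h] l2inner_cnj_commute[OF h l2_initial])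
  also have "\<dots> = complex_of_real ((l2norm v)\<^sup>2)"
    unfolding v_def l2norm_lincomb_orthonormal by (simp add: complex_norm_square[symmetric])
  finally have "(l2norm v)\<^sup>2 \<le> l2norm v * l2norm h"
    using l2inner_Cauchy_Schwarz[OF v h] by (simp only: norm_of_real abs_power2)
  then have "l2norm v \<le> l2norm h"
    using l2norm_nonneg[OF v] l2norm_nonneg[OF h]
    by (cases "l2norm v = 0") (auto simp: power2_eq_square)
  then have "(l2norm v)\<^sup>2 \<le> (l2norm h)\<^sup>2"
    using l2norm_nonneg[OF v] by (simp add: power_mono)
  then show ?thesis unfolding v_def l2norm_lincomb_orthonormal .
qed

end

section \<open>Orthonormal bases with triangular coordinates\<close>

locale triangular_onb =
  fixes F :: "nat \<Rightarrow> vec" and N :: "nat \<Rightarrow> nat"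
  assumes orthonormal: "orthonormal_on UNIV F"
    and ebasis_lincomb: "\<exists>c. ebasis n = lincomb F (N n) c"
begin

lemma F_l2: "F j \<in> l2"
  using orthonormal by (simp add: orthonormal_on_def)

lemma F_orthonormal: "l2inner (F i) (F j) = (if i = j then 1 else 0)"
  using orthonormal by (simp add: orthonormal_on_def)

lemma ebasis_expansion: "ebasis n = lincomb F (N n) (\<lambda>j. cnj (F j n))"
proof -
  obtain c where "ebasis n = lincomb F (N n) c" using ebasis_lincomb by blast
  then have "ebasis n = lincomb F (N n) (\<lambda>j. l2inner (ebasis n) (F j))"
    by (rule lincomb_orthonormal_coeffs[OF orthonormal subset_UNIV])
  then show ?thesis by (simp add: l2inner_ebasis_left)
qed

lemma F_eq_0: "N n \<le> j \<Longrightarrow> F j n = 0"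
  using l2inner_lincomb_orthonormal[OF orthonormal, of "N n" j "\<lambda>j. cnj (F j n)"]
  by (simp add: ebasis_expansion[symmetric] l2inner_ebasis_left)

text \<open>\<open>U g\<close> is \<open>\<Sum>\<^sub>j g j \<cdot> F j\<close>: its \<open>n\<close>-th coordinate only involves \<open>j < N n\<close> by \<open>F_eq_0\<close>.\<close>

definition U :: "vec \<Rightarrow> vec" where
  "U g = (\<lambda>n. lincomb F (N n) g n)"

definition Ustar :: "vec \<Rightarrow> vec" where
  "Ustar h = (\<lambda>j. l2inner h (F j))"

lemma U_finite_support:
  assumes "\<And>j. M \<le> j \<Longrightarrow> g j = 0"
  shows "U g = lincomb F M g"
proof
  fix n
  have "lincomb F (N n) g n = (\<Sum>j<max M (N n). g j * F j n)"
    unfolding lincomb_def by (rule sum.mono_neutral_left) (auto simp: F_eq_0)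
  also have "\<dots> = lincomb F M g n"
    unfolding lincomb_def by (rule sum.mono_neutral_right) (auto simp: assms)
  finally show "U g n = lincomb F M g n" by (simp add: U_def)
qed

lemma U_truncate: "U (truncate M g) = lincomb F M g"
  by (subst U_finite_support[of M]) (auto simp: truncate_def lincomb_def)

lemma U_bounded:
  assumes g: "g \<in> l2"
  shows "U g \<in> l2" and "l2norm (U g) \<le> l2norm g"
proof -
  have bound: "(\<Sum>n<K. (cmod (U g n))\<^sup>2) \<le> (l2norm g)\<^sup>2" for K
  proof -
    define M where "M = (\<Sum>n<K. N n)"
    have "n < K \<Longrightarrow> U g n = U (truncate M g) n" for n
      using member_le_sum[of n "{..<K}" N] unfolding U_def truncate_def lincomb_def M_def
      by (intro sum.cong) auto
    then have "(\<Sum>n<K. (cmod (U g n))\<^sup>2) = (\<Sum>n<K. (cmod (lincomb F M g n))\<^sup>2)"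
      by (simp add: U_truncate)
    also have "\<dots> \<le> (l2norm (lincomb F M g))\<^sup>2"
      using l2_lincomb[OF F_l2, where M=M and c=g]
      by (auto simp: suminf_cmod_sq_eq_l2norm_sq[symmetric] mem_l2_iff intro: sum_le_suminf)
    also have "\<dots> = (\<Sum>j<M. (cmod (g j))\<^sup>2)"
      by (rule l2norm_lincomb_orthonormal[OF orthonormal]) simp
    also have "\<dots> \<le> (l2norm g)\<^sup>2"
      using g by (auto simp: suminf_cmod_sq_eq_l2norm_sq[symmetric] mem_l2_iff intro: sum_le_suminf)
    finally show ?thesis .
  qed
  show "U g \<in> l2" "l2norm (U g) \<le> l2norm g"
    by (rule l2_bounded_partial_sums[OF bound l2norm_nonneg[OF g]])+
qed

lemma Ustar_bounded:
  assumes h: "h \<in> l2"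
  shows "Ustar h \<in> l2" and "l2norm (Ustar h) \<le> l2norm h"
  using l2_bounded_partial_sums[OF Bessel_inequality[OF orthonormal _ h] l2norm_nonneg[OF h]]
  by (simp_all add: Ustar_def)

lemma U_linear: "U (\<lambda>n. a * f n + g n) = (\<lambda>n. a * U f n + U g n)"
  unfolding U_def lincomb_def by (simp add: algebra_simps sum.distrib sum_distrib_left)

lemma U_diff: "U (\<lambda>n. f n - g n) = (\<lambda>n. U f n - U g n)"
  unfolding U_def lincomb_def by (simp add: algebra_simps sum_subtractf)

lemma Ustar_linear:
  "f \<in> l2 \<Longrightarrow> g \<in> l2 \<Longrightarrow> Ustar (\<lambda>n. a * f n + g n) = (\<lambda>n. a * Ustar f n + Ustar g n)"
  unfolding Ustar_def by (simp add: l2inner_add_left F_l2)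

text \<open>Adjointness holds trivially for finitely supported \<open>g\<close> and passes to the limit over
  truncations, both sides being continuous in \<open>g\<close>.\<close>

lemma U_adjoint:
  assumes g: "g \<in> l2" and h: "h \<in> l2"
  shows "l2inner (U g) h = l2inner g (Ustar h)"
proof (rule LIMSEQ_unique)
  have trunc: "(\<lambda>M. l2norm (\<lambda>n. g n - truncate M g n)) \<longlonglongrightarrow> 0"
    by (rule l2norm_truncate_tendsto[OF g])
  have "l2norm (\<lambda>n. U g n - U (truncate M g) n) \<le> l2norm (\<lambda>n. g n - truncate M g n)" for M
    using U_bounded(2)[OF l2_diff[OF g l2_truncate]] by (simp add: U_diff)
  then show "(\<lambda>M. l2inner (U (truncate M g)) h) \<longlonglongrightarrow> l2inner (U g) h"
    by (rule l2inner_tendsto[OF U_bounded(1)[OF l2_truncate] U_bounded(1)[OF g] h _ trunc])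
  have "l2inner (U (truncate M g)) h = l2inner (truncate M g) (Ustar h)" for M
  proof -
    have "l2inner (U (truncate M g)) h = (\<Sum>j<M. g j * l2inner (F j) h)"
      unfolding U_truncate by (rule l2inner_lincomb_left[OF F_l2 h])
    also have "\<dots> = (\<Sum>j<M. g j * cnj (Ustar h j))"
      unfolding Ustar_def by (simp only: l2inner_cnj_commute[OF h F_l2])
    also have "\<dots> = l2inner (truncate M g) (Ustar h)"
      unfolding l2inner_def by (subst suminf_finite[of "{..<M}"]) (auto simp: truncate_def)
    finally show ?thesis .
  qed
  then show "(\<lambda>M. l2inner (U (truncate M g)) h) \<longlonglongrightarrow> l2inner g (Ustar h)"
    using l2inner_tendsto[OF l2_truncate g Ustar_bounded(1)[OF h] order_refl trunc] by simp
qed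

lemma Ustar_U: "g \<in> l2 \<Longrightarrow> Ustar (U g) = g"
proof
  fix j assume g: "g \<in> l2"
  have "Ustar (U g) j = l2inner g (Ustar (F j))"
    using U_adjoint[OF g F_l2] by (simp add: Ustar_def)
  also have "Ustar (F j) = ebasis j"
    unfolding Ustar_def ebasis_def by (auto simp: F_orthonormal)
  finally show "Ustar (U g) j = g j" by (simp add: l2inner_ebasis_right)
qed

lemma U_Ustar:
  assumes h: "h \<in> l2"
  shows "U (Ustar h) = h"
proof
  fix n
  have "h n = l2inner h (lincomb F (N n) (\<lambda>j. cnj (F j n)))"
    by (simp add: ebasis_expansion[symmetric] l2inner_ebasis_right)
  also have "\<dots> = cnj (\<Sum>j<N n. cnj (F j n) * l2inner (F j) h)"
    by (simp add: l2inner_cnj_commute[OF l2_lincomb[OF F_l2] h] l2inner_lincomb_left[OF F_l2 h])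
  also have "\<dots> = U (Ustar h) n"
    by (simp add: U_def lincomb_def Ustar_def l2inner_cnj_commute[OF h F_l2] mult.commute)
  finally show "U (Ustar h) n = h n" ..
qed

lemma unitary: "unitary_with_adj U Ustar"
proof -
  have "bop U"
    unfolding bop_def using U_bounded U_linear by (metis mult_1)
  moreover have "bop Ustar"
    unfolding bop_def using Ustar_bounded Ustar_linear by (metis mult_1)
  ultimately show ?thesis
    unfolding unitary_with_adj_def is_adjoint_def using U_adjoint Ustar_U U_Ustar by blast
qed

end

section \<open>Gram-Schmidt orthonormalisation\<close>

abbreviation orthonormal_list :: "vec list \<Rightarrow> bool" where
  "orthonormal_list L \<equiv> orthonormal_on {..<length L} ((!) L)"

definition list_span :: "vec list \<Rightarrow> vec set" where
  "list_span L = range (lincomb ((!) L) (length L))"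

lemma lin_closed_list_span: "lin_closed (list_span L)"
  unfolding lin_closed_def list_span_def
proof (intro conjI allI impI)
  show "(\<lambda>n. 0) \<in> range (lincomb ((!) L) (length L))"
    by (rule range_eqI[where x="\<lambda>j. 0"]) (simp add: lincomb_def)
  fix a f g
  assume "f \<in> range (lincomb ((!) L) (length L))" "g \<in> range (lincomb ((!) L) (length L))"
  then show "(\<lambda>n. a * f n + g n) \<in> range (lincomb ((!) L) (length L))"
    by (auto simp: lincomb_add[symmetric])
qed

lemma lincomb_append: "lincomb ((!) (L @ L')) (length L) c = lincomb ((!) L) (length L) c"
  unfolding lincomb_def by (simp add: nth_append)

lemma list_span_append: "list_span L \<subseteq> list_span (L @ L')"
proof
  fix v assume "v \<in> list_span L"
  then obtain c where "v = lincomb ((!) L) (length L) c" by (auto simp: list_span_def)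
  also have "\<dots> = lincomb ((!) (L @ L')) (length L) c"
    by (rule lincomb_append[symmetric])
  also have "\<dots> = lincomb ((!) (L @ L')) (length (L @ L')) (\<lambda>j. if j < length L then c j else 0)"
    by (rule lincomb_extend) simp
  finally show "v \<in> list_span (L @ L')" by (simp add: list_span_def)
qed

definition proj :: "vec list \<Rightarrow> vec \<Rightarrow> vec" where
  "proj L g = lincomb ((!) L) (length L) (\<lambda>j. l2inner g (L!j))"

definition residual :: "vec list \<Rightarrow> vec \<Rightarrow> vec" where
  "residual L g = (\<lambda>n. g n - proj L g n)"

definition scale_to_unit :: "vec \<Rightarrow> vec" where
  "scale_to_unit h = (\<lambda>n. complex_of_real (1 / l2norm h) * h n)"

lemma l2_proj: "orthonormal_list L \<Longrightarrow> proj L g \<in> l2"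
  unfolding proj_def by (rule l2_lincomb) (simp add: orthonormal_on_def)

lemma l2_residual: "orthonormal_list L \<Longrightarrow> g \<in> l2 \<Longrightarrow> residual L g \<in> l2"
  unfolding residual_def by (rule l2_diff[OF _ l2_proj])

lemma l2inner_residual:
  assumes L: "orthonormal_list L" and g: "g \<in> l2" and i: "i < length L"
  shows "l2inner (residual L g) (L!i) = 0"
  using l2inner_diff_left[OF g l2_proj[OF L]] L i
    l2inner_lincomb_orthonormal[OF L order_refl, of i "\<lambda>j. l2inner g (L!j)"]
  by (simp add: residual_def proj_def orthonormal_on_def)

lemma residual_mem_lin_closed:
  assumes S: "lin_closed S" "set L \<subseteq> S" "g \<in> S"
  shows "residual L g \<in> S"
proof -
  have "(\<lambda>n. \<Sum>j<length L. (- l2inner g (L!j)) * (L!j) n) \<in> S"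
    using S by (intro lin_closed_sum) auto
  then have "(\<lambda>n. 1 * g n + (\<Sum>j<length L. (- l2inner g (L!j)) * (L!j) n)) \<in> S"
    using S unfolding lin_closed_def by blast
  then show ?thesis by (simp add: residual_def proj_def lincomb_def sum_negf)
qed

lemma l2_scale_to_unit: "h \<in> l2 \<Longrightarrow> scale_to_unit h \<in> l2"
  unfolding scale_to_unit_def by (rule l2_scale)

lemma scale_to_unit_mem_lin_closed:
  assumes "lin_closed S" "h \<in> S"
  shows "scale_to_unit h \<in> S"
proof -
  have "(\<lambda>n. complex_of_real (1 / l2norm h) * h n + 0) \<in> S"
    using assms unfolding lin_closed_def by blast
  then show ?thesis by (simp add: scale_to_unit_def)
qed

lemma l2inner_scale_to_unit_left:
  "h \<in> l2 \<Longrightarrow> v \<in> l2 \<Longrightarrow> l2inner (scale_to_unit h) v = complex_of_real (1 / l2norm h) * l2inner h v"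
  unfolding scale_to_unit_def by (rule l2inner_scale_left)

lemma l2inner_scale_to_unit_self:
  assumes h: "h \<in> l2" and nz: "h \<noteq> (\<lambda>n. 0)"
  shows "l2inner (scale_to_unit h) (scale_to_unit h) = 1"
proof -
  have r: "l2norm h \<noteq> 0" using nz l2norm_eq_0_imp_zero[OF h] by auto
  have q: "scale_to_unit h \<in> l2" by (rule l2_scale_to_unit[OF h])
  have "l2inner (scale_to_unit h) (scale_to_unit h) =
      complex_of_real (1 / l2norm h) * cnj (complex_of_real (1 / l2norm h) * l2inner h h)"
    by (simp only: l2inner_scale_to_unit_left[OF h q] l2inner_cnj_commute[OF q h]
        l2inner_scale_to_unit_left[OF h h])
  also have "\<dots> = 1"
    using r by (simp add: l2inner_self[OF h] power2_eq_square)
  finally show ?thesis .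
qed

lemma scale_to_unit_rescale: "h \<in> l2 \<Longrightarrow> h \<noteq> (\<lambda>n. 0) \<Longrightarrow> h n = complex_of_real (l2norm h) * scale_to_unit h n"
  using l2norm_eq_0_imp_zero by (fastforce simp: scale_to_unit_def)

lemma orthonormal_list_snoc:
  assumes L: "orthonormal_list L" and q: "q \<in> l2" "l2inner q q = 1"
    and orth: "\<And>i. i < length L \<Longrightarrow> l2inner q (L!i) = 0"
  shows "orthonormal_list (L @ [q])"
proof -
  have "l2inner (L!i) q = 0" if "i < length L" for i
    using l2inner_cnj_commute[OF q(1), of "L!i"] orth[OF that] L that
    by (simp add: orthonormal_on_def)
  then show ?thesis
    using L q orth by (auto simp: orthonormal_on_def nth_append less_Suc_eq)
qed

definition gs_step :: "vec list \<Rightarrow> vec \<Rightarrow> vec list" where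
  "gs_step L g = (if residual L g = (\<lambda>n. 0) then L else L @ [scale_to_unit (residual L g)])"

lemma gs_step_extends: "\<exists>L'. gs_step L g = L @ L'"
  by (auto simp: gs_step_def)

lemma length_gs_step: "length (gs_step L g) \<le> Suc (length L)"
  by (simp add: gs_step_def)

lemma gs_step_subset: "lin_closed S \<Longrightarrow> set L \<subseteq> S \<Longrightarrow> g \<in> S \<Longrightarrow> set (gs_step L g) \<subseteq> S"
  by (simp add: gs_step_def scale_to_unit_mem_lin_closed residual_mem_lin_closed)

context
  fixes L :: "vec list" and g :: vec
  assumes L: "orthonormal_list L" and g: "g \<in> l2"
begin

lemma orthonormal_gs_step: "orthonormal_list (gs_step L g)"
proof (cases "residual L g = (\<lambda>n. 0)")
  case False
  have h: "residual L g \<in> l2" by (rule l2_residual[OF L g])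
  have "l2inner (scale_to_unit (residual L g)) (L!i) = 0" if "i < length L" for i
    using l2inner_residual[OF L g that] L that
    by (simp add: l2inner_scale_to_unit_left[OF h] orthonormal_on_def)
  then show ?thesis
    using orthonormal_list_snoc[OF L l2_scale_to_unit[OF h] l2inner_scale_to_unit_self[OF h False]] False
    by (simp add: gs_step_def)
qed (use L in \<open>simp add: gs_step_def\<close>)

lemma gs_step_spans: "g \<in> list_span (gs_step L g)"
proof (cases "residual L g = (\<lambda>n. 0)")
  case True
  then have "g = proj L g" by (simp add: residual_def fun_eq_iff)
  then have "g \<in> list_span L" unfolding proj_def list_span_def by blast
  then show ?thesis using True by (simp add: gs_step_def)
next
  case False
  define q where "q = scale_to_unit (residual L g)"
  define r where "r = complex_of_real (l2norm (residual L g))"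
  let ?c = "\<lambda>j. if j < length L then l2inner g (L!j) else r"
  have h: "residual L g \<in> l2" by (rule l2_residual[OF L g])
  have "g = lincomb ((!) (L @ [q])) (length (L @ [q])) ?c"
  proof
    fix n
    have "g n = proj L g n + residual L g n" by (simp add: residual_def)
    also have "\<dots> = proj L g n + r * q n"
      unfolding q_def r_def by (subst scale_to_unit_rescale[OF h False]) (rule refl)
    also have "proj L g = lincomb ((!) (L @ [q])) (length L) ?c"
      unfolding proj_def lincomb_append by (rule lincomb_cong) simp_all
    also have "lincomb ((!) (L @ [q])) (length L) ?c n + r * q n
        = lincomb ((!) (L @ [q])) (length (L @ [q])) ?c n"
      by (simp add: lincomb_Suc)
    finally show "g n = lincomb ((!) (L @ [q])) (length (L @ [q])) ?c n" .
  qed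
  moreover have "gs_step L g = L @ [q]" using False by (simp add: gs_step_def q_def)
  ultimately show ?thesis unfolding list_span_def by (metis rangeI)
qed

end

lemma foldl_gs_step_extends: "\<exists>L'. foldl gs_step L gs = L @ L'"
proof (induction gs arbitrary: L)
  case (Cons g gs)
  then show ?case using gs_step_extends[of L g] by (metis append.assoc foldl_Cons)
qed simp

lemma length_foldl_gs_step: "length (foldl gs_step L gs) \<le> length L + length gs"
proof (induction gs arbitrary: L)
  case (Cons g gs)
  have "length (foldl gs_step (gs_step L g) gs) \<le> length (gs_step L g) + length gs"
    by (rule Cons.IH)
  with length_gs_step[of L g] show ?case by simp
qed simp

lemma foldl_gs_step_subset:
  "lin_closed S \<Longrightarrow> set L \<subseteq> S \<Longrightarrow> set gs \<subseteq> S \<Longrightarrow> set (foldl gs_step L gs) \<subseteq> S"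
  by (induction gs arbitrary: L) (auto simp: gs_step_subset)

lemma orthonormal_foldl_gs_step:
  "orthonormal_list L \<Longrightarrow> set gs \<subseteq> l2 \<Longrightarrow> orthonormal_list (foldl gs_step L gs)"
  by (induction gs arbitrary: L) (auto simp: orthonormal_gs_step)

lemma foldl_gs_step_spans:
  "orthonormal_list L \<Longrightarrow> set gs \<subseteq> l2 \<Longrightarrow> list_span L \<union> set gs \<subseteq> list_span (foldl gs_step L gs)"
proof (induction gs arbitrary: L)
  case Nil
  then show ?case by simp
next
  case (Cons g gs)
  have "list_span L \<union> {g} \<subseteq> list_span (gs_step L g)"
    using Cons.prems gs_step_spans gs_step_extends[of L g] list_span_append by fastforce
  then show ?case
    using Cons.IH[of "gs_step L g"] Cons.prems orthonormal_gs_step by auto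
qed

text \<open>Trace argument: the double sum of \<open>|(L!j) i|\<^sup>2\<close> over \<open>i < m\<close> and \<open>j < length L\<close> equals
  \<open>m\<close> when summed over \<open>j\<close> first (Parseval for \<open>ebasis i\<close>) and is at most \<open>length L\<close> when
  summed over \<open>i\<close> first (each \<open>L!j\<close> is a unit vector).\<close>

lemma length_ge_if_ebasis_in_list_span:
  assumes L: "orthonormal_list L" and e: "\<And>i. i < m \<Longrightarrow> ebasis i \<in> list_span L"
  shows "m \<le> length L"
proof -
  have row: "(\<Sum>j<length L. (cmod ((L!j) i))\<^sup>2) = 1" if i: "i < m" for i
  proof -
    obtain c where "ebasis i = lincomb ((!) L) (length L) c"
      using e[OF i] by (auto simp: list_span_def)
    then have "ebasis i = lincomb ((!) L) (length L) (\<lambda>j. l2inner (ebasis i) (L!j))"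
      by (rule lincomb_orthonormal_coeffs[OF L order_refl])
    then have "(l2norm (ebasis i))\<^sup>2
        = (l2norm (lincomb ((!) L) (length L) (\<lambda>j. l2inner (ebasis i) (L!j))))\<^sup>2"
      by (rule arg_cong)
    also have "\<dots> = (\<Sum>j<length L. (cmod ((L!j) i))\<^sup>2)"
      by (simp add: l2norm_lincomb_orthonormal[OF L order_refl] l2inner_ebasis_left)
    finally have "(l2norm (ebasis i))\<^sup>2 = (\<Sum>j<length L. (cmod ((L!j) i))\<^sup>2)" .
    moreover have "complex_of_real ((l2norm (ebasis i))\<^sup>2) = 1"
      unfolding l2inner_self[OF l2_ebasis, symmetric] l2inner_ebasis_right by (simp add: ebasis_def)
    ultimately show ?thesis by (simp only: of_real_eq_1_iff)
  qed
  have column: "(\<Sum>i<m. (cmod ((L!j) i))\<^sup>2) \<le> 1" if j: "j < length L" for j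
  proof -
    have Lj: "L!j \<in> l2" "l2inner (L!j) (L!j) = 1" using L j by (auto simp: orthonormal_on_def)
    have "(\<Sum>i<m. (cmod ((L!j) i))\<^sup>2) \<le> (l2norm (L!j))\<^sup>2"
      using Lj(1) by (auto simp: suminf_cmod_sq_eq_l2norm_sq[symmetric] mem_l2_iff intro: sum_le_suminf)
    also have "(l2norm (L!j))\<^sup>2 = 1"
      using l2inner_self[OF Lj(1)] Lj(2) by (metis of_real_eq_1_iff)
    finally show ?thesis .
  qed
  have "real m = (\<Sum>i<m. \<Sum>j<length L. (cmod ((L!j) i))\<^sup>2)" using row by simp
  also have "\<dots> = (\<Sum>j<length L. \<Sum>i<m. (cmod ((L!j) i))\<^sup>2)" by (rule sum.swap)
  also have "\<dots> \<le> real (length L)" using sum_mono[of "{..<length L}", OF column] by simp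
  finally show ?thesis by simp
qed

section \<open>The spaces V_k and the Gram-Schmidt basis\<close>

definition word_vec :: "nat \<Rightarrow> (nat \<Rightarrow> vec \<Rightarrow> vec) \<Rightarrow> nat list \<Rightarrow> vec" where
  "word_vec d X w = word_op (tupXM d X) w (ebasis 0)"

definition words_of_length :: "nat \<Rightarrow> nat \<Rightarrow> nat list set" where
  "words_of_length i d = {w. length w = i \<and> set w \<subseteq> {..d}}"

definition word_list :: "nat \<Rightarrow> nat \<Rightarrow> nat list list" where
  "word_list i d = (SOME ws. set ws = words_of_length i d \<and> distinct ws)"

lemma finite_words_of_length: "finite (words_of_length i d)"
  using finite_lists_length_eq[of "{..d}" i] by (simp add: words_of_length_def conj_commute)

lemma word_list: "distinct (word_list i d)" "set (word_list i d) = words_of_length i d"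
  using someI_ex[OF finite_distinct_list[OF finite_words_of_length, of i d]]
  by (simp_all add: word_list_def)

lemma finite_words: "finite (words k d)"
  using finite_lists_length_le[of "{..d}" k] by (simp add: words_def conj_commute)

lemma card_words: "card (words k d) = (\<Sum>i\<le>k. length (word_list i d))"
proof -
  have "words k d = (\<Union>i\<le>k. words_of_length i d)"
    by (auto simp: words_def words_of_length_def)
  moreover have "card (\<Union>i\<le>k. words_of_length i d) = (\<Sum>i\<le>k. card (words_of_length i d))"
    by (rule card_UN_disjoint) (simp_all add: finite_words_of_length, auto simp: words_of_length_def)
  ultimately have "card (words k d) = (\<Sum>i\<le>k. card (words_of_length i d))" by simp
  then show ?thesis
    by (simp add: word_list(2)[symmetric] distinct_card[OF word_list(1)])
qed

lemma replicate_in_words: "replicate n d \<in> words n d"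
  by (auto simp: words_def)

lemma word_vec_replicate: "word_vec d X (replicate i d) = ebasis i"
proof (induction i)
  case 0
  then show ?case by (simp add: word_vec_def word_op_def)
next
  case (Suc i)
  have "shiftM (ebasis i) = ebasis (Suc i)"
    by (auto simp: shiftM_def ebasis_def fun_eq_iff)
  with Suc show ?case by (simp add: word_vec_def word_op_def tupXM_def)
qed

lemma l2_word_vec:
  assumes X: "\<forall>i<d. bop (X i)" and w: "set w \<subseteq> {..d}"
  shows "word_vec d X w \<in> l2"
  using w unfolding word_vec_def
proof (induction w)
  case Nil
  then show ?case by (simp add: word_op_def l2_ebasis)
next
  case (Cons i w)
  have shift: "shiftM f \<in> l2" if "f \<in> l2" for f
    using that unfolding mem_l2_iff by (subst summable_Suc_iff[symmetric]) (simp add: shiftM_def)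
  from Cons show ?case
    using X by (auto simp: word_op_def tupXM_def bop_def shift)
qed

lemma lin_closed_Vk: "lin_closed (Vk k d X)"
  unfolding lin_closed_def
proof (intro conjI allI impI)
  show "(\<lambda>n. 0) \<in> Vk k d X"
    unfolding Vk_def poly_eval_def by (rule CollectI, rule exI[of _ "\<lambda>w. 0"]) simp
  fix a f g assume "f \<in> Vk k d X" "g \<in> Vk k d X"
  then obtain p q where "f = poly_eval k d X p (ebasis 0)" "g = poly_eval k d X q (ebasis 0)"
    by (auto simp: Vk_def)
  then have "(\<lambda>n. a * f n + g n) = poly_eval k d X (\<lambda>w. a * p w + q w) (ebasis 0)"
    unfolding poly_eval_def by (simp add: algebra_simps sum.distrib sum_distrib_left)
  then show "(\<lambda>n. a * f n + g n) \<in> Vk k d X" unfolding Vk_def by blast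
qed

lemma Vk_eq_poly_word_vec: "Vk k d X = {(\<lambda>n. \<Sum>w\<in>words k d. p w * word_vec d X w n) | p. True}"
  by (simp add: Vk_def poly_eval_def word_vec_def)

lemma word_vec_in_Vk:
  assumes "w \<in> words k d"
  shows "word_vec d X w \<in> Vk k d X"
proof -
  have "words k d \<inter> {w'. w' = w} = {w}" using assms by auto
  then have "word_vec d X w = (\<lambda>n. \<Sum>w'\<in>words k d. of_bool (w' = w) * word_vec d X w' n)"
    using finite_words by simp
  then show ?thesis
    unfolding Vk_eq_poly_word_vec by (intro CollectI exI[of _ "\<lambda>w'. of_bool (w' = w)"]) simp
qed

lemma Vk_subset:
  assumes "lin_closed S" "\<And>w. w \<in> words k d \<Longrightarrow> word_vec d X w \<in> S"
  shows "Vk k d X \<subseteq> S"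
  unfolding Vk_eq_poly_word_vec using lin_closed_sum[OF assms(1) finite_words] assms(2) by blast

text \<open>Stage \<open>k\<close> of the Gram-Schmidt process has treated all words of length \<open>< k\<close>, in order of
  increasing length.\<close>

primrec gs_stage :: "nat \<Rightarrow> (nat \<Rightarrow> vec \<Rightarrow> vec) \<Rightarrow> nat \<Rightarrow> vec list" where
  "gs_stage d X 0 = []"
| "gs_stage d X (Suc k) = foldl gs_step (gs_stage d X k) (map (word_vec d X) (word_list k d))"

declare gs_stage.simps(2) [simp del]

definition gs_vec :: "nat \<Rightarrow> (nat \<Rightarrow> vec \<Rightarrow> vec) \<Rightarrow> nat \<Rightarrow> vec" where
  "gs_vec d X j = gs_stage d X (Suc j) ! j"

lemma gs_stage_prefix: "j \<le> k \<Longrightarrow> \<exists>L'. gs_stage d X k = gs_stage d X j @ L'"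
proof (induction k rule: dec_induct)
  case (step k)
  then show ?case
    using foldl_gs_step_extends[of "gs_stage d X k"] by (metis append.assoc gs_stage.simps(2))
qed simp

lemma length_gs_stage: "length (gs_stage d X (Suc k)) \<le> alpha k d"
proof -
  have bound: "length (gs_stage d X k) \<le> (\<Sum>i<k. length (word_list i d))" for k
  proof (induction k)
    case (Suc k)
    then show ?case
      using length_foldl_gs_step[of "gs_stage d X k" "map (word_vec d X) (word_list k d)"]
      by (simp add: gs_stage.simps(2))
  qed simp
  show ?thesis using bound[of "Suc k"] by (simp add: alpha_def card_words lessThan_Suc_atMost)
qed

lemma gs_stage_subset_Vk: "k \<le> Suc k' \<Longrightarrow> set (gs_stage d X k) \<subseteq> Vk k' d X"
proof (induction k)
  case (Suc k)
  have "set (map (word_vec d X) (word_list k d)) \<subseteq> Vk k' d X"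
    using Suc.prems word_vec_in_Vk by (auto simp: word_list(2) words_of_length_def words_def)
  with Suc show ?case by (simp add: gs_stage.simps(2) foldl_gs_step_subset lin_closed_Vk)
qed simp

context
  fixes d :: nat and X :: "nat \<Rightarrow> vec \<Rightarrow> vec"
  assumes X: "\<forall>i<d. bop (X i)"
begin

private lemma word_vecs_l2: "set (map (word_vec d X) (word_list k d)) \<subseteq> l2"
  using l2_word_vec[OF X] by (auto simp: word_list(2) words_of_length_def)

lemma orthonormal_gs_stage: "orthonormal_list (gs_stage d X k)"
proof (induction k)
  case 0
  then show ?case by (simp add: orthonormal_on_def)
next
  case (Suc k)
  then show ?case
    unfolding gs_stage.simps(2) by (rule orthonormal_foldl_gs_step[OF _ word_vecs_l2])
qed

lemma word_vec_in_gs_stage_span: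
  "length w < k \<Longrightarrow> set w \<subseteq> {..d} \<Longrightarrow> word_vec d X w \<in> list_span (gs_stage d X k)"
proof (induction k)
  case (Suc k)
  have span: "list_span (gs_stage d X k) \<union> word_vec d X ` set (word_list k d)
      \<subseteq> list_span (gs_stage d X (Suc k))"
    using foldl_gs_step_spans[OF orthonormal_gs_stage word_vecs_l2] by (simp add: gs_stage.simps(2))
  show ?case
  proof (cases "length w = k")
    case True
    then have "w \<in> set (word_list k d)"
      using Suc.prems by (simp add: word_list(2) words_of_length_def)
    with span show ?thesis by auto
  next
    case False
    then have "word_vec d X w \<in> list_span (gs_stage d X k)"
      using Suc by simp
    with span show ?thesis by auto
  qed
qed simp

lemma Vk_subset_gs_stage_span: "Vk k d X \<subseteq> list_span (gs_stage d X (Suc k))"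
  by (rule Vk_subset[OF lin_closed_list_span word_vec_in_gs_stage_span]) (auto simp: words_def)

lemma length_gs_stage_ge: "Suc k \<le> length (gs_stage d X (Suc k))"
proof (rule length_ge_if_ebasis_in_list_span[OF orthonormal_gs_stage])
  fix i assume "i < Suc k"
  then have "word_vec d X (replicate i d) \<in> list_span (gs_stage d X (Suc k))"
    using replicate_in_words[of i d] by (intro word_vec_in_gs_stage_span) (auto simp: words_def)
  then show "ebasis i \<in> list_span (gs_stage d X (Suc k))" by (simp add: word_vec_replicate)
qed

lemma gs_vec_nth: "j < length (gs_stage d X k) \<Longrightarrow> gs_vec d X j = gs_stage d X k ! j"
proof (cases "Suc j \<le> k")
  case True
  then obtain L' where "gs_stage d X k = gs_stage d X (Suc j) @ L'" using gs_stage_prefix by blast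
  then show ?thesis using length_gs_stage_ge[of j] by (simp add: gs_vec_def nth_append)
next
  case False
  assume "j < length (gs_stage d X k)"
  moreover obtain L' where "gs_stage d X (Suc j) = gs_stage d X k @ L'"
    using gs_stage_prefix False by fastforce
  ultimately show ?thesis by (simp add: gs_vec_def nth_append)
qed

lemma orthonormal_gs_vec: "orthonormal_on UNIV (gs_vec d X)"
proof -
  have "gs_vec d X i \<in> l2 \<and> l2inner (gs_vec d X i) (gs_vec d X j) = (if i = j then 1 else 0)" for i j
  proof -
    define L where "L = gs_stage d X (Suc (max i j))"
    have "i < length L" "j < length L"
      using length_gs_stage_ge[of "max i j"] by (auto simp: L_def)
    moreover have "orthonormal_list L" by (simp add: L_def orthonormal_gs_stage)
    ultimately show ?thesis
      by (simp add: gs_vec_nth L_def orthonormal_on_def)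
  qed
  then show ?thesis by (simp add: orthonormal_on_def)
qed

lemma gs_vec_in_Vk: "j \<le> k \<Longrightarrow> gs_vec d X j \<in> Vk k d X"
  using gs_stage_subset_Vk[of "Suc j" k d X] length_gs_stage_ge[of j] by (auto simp: gs_vec_def)

lemma Vk_lincomb_gs_vec:
  assumes "v \<in> Vk k d X"
  shows "\<exists>c. v = lincomb (gs_vec d X) (alpha k d) c"
proof -
  let ?L = "gs_stage d X (Suc k)"
  obtain c where "v = lincomb ((!) ?L) (length ?L) c"
    using assms Vk_subset_gs_stage_span by (auto simp: list_span_def)
  also have "\<dots> = lincomb (gs_vec d X) (length ?L) c"
    by (rule lincomb_cong) (simp_all add: gs_vec_nth)
  also have "\<dots> = lincomb (gs_vec d X) (alpha k d) (\<lambda>j. if j < length ?L then c j else 0)"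
    by (rule lincomb_extend[OF length_gs_stage])
  finally show ?thesis by blast
qed

lemma triangular_onb_gs_vec: "triangular_onb (gs_vec d X) (\<lambda>n. alpha n d)"
proof
  show "orthonormal_on UNIV (gs_vec d X)" by (rule orthonormal_gs_vec)
  fix n
  have "ebasis n \<in> Vk n d X"
    using word_vec_in_Vk[OF replicate_in_words] by (simp add: word_vec_replicate)
  then show "\<exists>c. ebasis n = lincomb (gs_vec d X) (alpha n d) c" by (rule Vk_lincomb_gs_vec)
qed

end

theorem mainTheorem15:
  fixes d :: nat and X :: "nat \<Rightarrow> vec \<Rightarrow> vec"
  assumes "\<forall>i<d. bop (X i)"
  shows "\<exists>u ustar. unitary_with_adj u ustar \<and>
           (\<forall>k. (\<forall>f\<in>span_e (k + 1). u f \<in> Vk k d X) \<and>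
                (\<forall>v\<in>Vk k d X. ustar v \<in> span_e (alpha k d)))"
proof -
  interpret triangular_onb "gs_vec d X" "\<lambda>n. alpha n d"
    by (rule triangular_onb_gs_vec[OF assms])
  have "U f \<in> Vk k d X" if "f \<in> span_e (k + 1)" for f k
  proof -
    have "U f = lincomb (gs_vec d X) (k + 1) f"
      using that by (intro U_finite_support) (simp add: span_e_def)
    also have "\<dots> \<in> Vk k d X"
      by (intro lin_closed_lincomb lin_closed_Vk gs_vec_in_Vk[OF assms]) simp
    finally show ?thesis .
  qed
  moreover have "Ustar v \<in> span_e (alpha k d)" if "v \<in> Vk k d X" for v k
    using Vk_lincomb_gs_vec[OF assms that]
    by (auto simp: span_e_def Ustar_def l2inner_lincomb_orthonormal[OF orthonormal subset_UNIV])
  ultimately show ?thesis using unitary by blast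
qed

end
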